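(* Consider the scheduling policy SIS with a transmission oracle in $TO_h$ and proactive hearing control $P$. Let $v$ be a node and $p$ a packet in its queue. Then during every $h$ consecutive rounds within the time interval from the arrival of $p$ at $v$ until $p$ is transmitted from $v$, node $v$ transmits at least one packet having priority higher than that of $p$.
   Context: Multi-hop radio network model: a network is a simple graph with $n$ nodes; time is divided into synchronous rounds. Packets are injected by an adversary, each with its complete path fixed at injection. Each node keeps a single, unbounded queue of packets to be forwarded. In each round a node transmits at most one message; a node $w$ hears a message of a neighbor $u$ in a round iff $u$ is the only neighbor of $w$ transmitting in that round. When $v$ transmits a packet whose next node on its path is $w$ and $w$ hears it, the packet leaves $v$ and is absorbed at $w$ or appended to $w$'s queue. A transmission oracle tells each node in each round whether to transmit. Proactive hearing control $P$: in a round in which the oracle tells $v$ to transmit, $v$ first learns which neighbors would hear its transmission, and the scheduling policy selects a packet among the queued packets whose next node is one of these neighbors (if any), which is then transmitted and heard. A directed link $(u,w)$ is up in a round if a packet transmitted by $u$ to $w$ in that round would be heard by $w$; $TO_h$ is the class of transmission oracles under which every link is up at least once in every $h$ consecutive rounds. Scheduling policy SIS (Shortest-In-System) gives priority to the packet that has been in the system for the shortest time, ties broken arbitrarily at each round; "packet $p$ has priority over $q$" means the policy prefers $p$ to $q$. *)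

theory Defs
  imports Main
begin

text \<open>A packet p is injected in round itime p
  with fixed path path p (a list of nodes, first node = injection node).
  An execution is described by tr t v = Some q iff node v transmits packet q
  in round t (and q is heard by its next node, as guaranteed under P).\<close>

definition simple_graph :: "'v set \<Rightarrow> ('v \<Rightarrow> 'v \<Rightarrow> bool) \<Rightarrow> bool" where
  "simple_graph V E \<longleftrightarrow> finite V \<and>
     (\<forall>u w. E u w \<longrightarrow> u \<in> V \<and> w \<in> V \<and> u \<noteq> w \<and> E w u)"

definition valid_path :: "('v \<Rightarrow> 'v \<Rightarrow> bool) \<Rightarrow> 'v list \<Rightarrow> bool" where
  "valid_path E ps \<longleftrightarrow> ps \<noteq> [] \<and> (\<forall>i. Suc i < length ps \<longrightarrow> E (ps ! i) (ps ! Suc i))"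

text \<open>Directed link (u,w) is up in round t: u is told to transmit and w would hear
  it, i.e. u is the only neighbour of w transmitting in round t.\<close>
definition link_up :: "('v \<Rightarrow> 'v \<Rightarrow> bool) \<Rightarrow> (nat \<Rightarrow> 'v \<Rightarrow> bool) \<Rightarrow> nat \<Rightarrow> 'v \<Rightarrow> 'v \<Rightarrow> bool" where
  "link_up E Orc t u w \<longleftrightarrow> E u w \<and> Orc t u \<and> (\<forall>u'. E u' w \<and> Orc t u' \<longrightarrow> u' = u)"

definition in_TO :: "('v \<Rightarrow> 'v \<Rightarrow> bool) \<Rightarrow> nat \<Rightarrow> (nat \<Rightarrow> 'v \<Rightarrow> bool) \<Rightarrow> bool" where
  "in_TO E h Orc \<longleftrightarrow> (\<forall>s u w. E u w \<longrightarrow> (\<exists>r. s \<le> r \<and> r < s + h \<and> link_up E Orc r u w))"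

fun pidx :: "(nat \<Rightarrow> 'v \<Rightarrow> 'p option) \<Rightarrow> 'p \<Rightarrow> nat \<Rightarrow> nat" where
  "pidx tr p 0 = 0"
| "pidx tr p (Suc t) = pidx tr p t + (if \<exists>v. tr t v = Some p then 1 else 0)"

text \<open>Packet p is in the queue of v at the start of round t (injected, not yet absorbed,
  currently located at v).\<close>
definition in_queue :: "('p \<Rightarrow> 'v list) \<Rightarrow> ('p \<Rightarrow> nat) \<Rightarrow> (nat \<Rightarrow> 'v \<Rightarrow> 'p option)
    \<Rightarrow> 'p \<Rightarrow> 'v \<Rightarrow> nat \<Rightarrow> bool" where
  "in_queue path itime tr p v t \<longleftrightarrow> itime p \<le> t \<and> Suc (pidx tr p t) < length (path p)
     \<and> path p ! pidx tr p t = v"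

definition next_node :: "('p \<Rightarrow> 'v list) \<Rightarrow> (nat \<Rightarrow> 'v \<Rightarrow> 'p option) \<Rightarrow> 'p \<Rightarrow> nat \<Rightarrow> 'v" where
  "next_node path tr p t = path p ! Suc (pidx tr p t)"

text \<open>Packets eligible for v in round t under proactive hearing control P: queued at v
  with next node among the neighbours that would hear v.\<close>
definition eligible :: "('v \<Rightarrow> 'v \<Rightarrow> bool) \<Rightarrow> (nat \<Rightarrow> 'v \<Rightarrow> bool) \<Rightarrow> ('p \<Rightarrow> 'v list) \<Rightarrow> ('p \<Rightarrow> nat)
    \<Rightarrow> (nat \<Rightarrow> 'v \<Rightarrow> 'p option) \<Rightarrow> nat \<Rightarrow> 'v \<Rightarrow> 'p set" where
  "eligible E Orc path itime tr t v =
     {p. in_queue path itime tr p v t \<and> link_up E Orc t v (next_node path tr p t)}"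

text \<open>Execution of policy SIS under proactive hearing control P with oracle Orc:
  a node told to transmit sends an eligible packet that has been in the system for the
  shortest time (latest injection), ties broken arbitrarily; otherwise nothing is sent.\<close>
definition SIS_P_execution :: "('v \<Rightarrow> 'v \<Rightarrow> bool) \<Rightarrow> (nat \<Rightarrow> 'v \<Rightarrow> bool) \<Rightarrow> ('p \<Rightarrow> 'v list)
    \<Rightarrow> ('p \<Rightarrow> nat) \<Rightarrow> (nat \<Rightarrow> 'v \<Rightarrow> 'p option) \<Rightarrow> bool" where
  "SIS_P_execution E Orc path itime tr \<longleftrightarrow>
     (\<forall>t v. if Orc t v \<and> eligible E Orc path itime tr t v \<noteq> {}
            then (\<exists>q. tr t v = Some q \<and> q \<in> eligible E Orc path itime tr t v
                      \<and> (\<forall>p' \<in> eligible E Orc path itime tr t v. itime p' \<le> itime q))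
            else tr t v = None)"

end

theory Submission
  imports Defs
begin

text \<open>While p waits at v it is transmitted by nobody, so its hop count and hence its next
  hop w stay fixed. In any h consecutive rounds the link from v to w is up at least once;
  in that round p is eligible at v, so SIS makes v send an eligible packet injected no
  earlier than p, and by assumption that packet is not p itself.\<close>

lemma SIS_P_execution_sends_eligible:
  assumes "SIS_P_execution E Orc path itime tr" and "tr t u = Some q"
  shows "q \<in> eligible E Orc path itime tr t u"
  using assms unfolding SIS_P_execution_def by (metis option.distinct(1) option.inject)

lemma SIS_P_execution_sends_younger:
  assumes "SIS_P_execution E Orc path itime tr" and "p \<in> eligible E Orc path itime tr t v"
  obtains q where "tr t v = Some q" and "itime p \<le> itime q"
proof -
  have "Orc t v"
    using assms(2) by (simp add: eligible_def link_up_def)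
  with assms show thesis
    using that unfolding SIS_P_execution_def by (metis empty_iff)
qed

lemma SIS_P_execution_sender_unique:
  assumes "SIS_P_execution E Orc path itime tr" and "in_queue path itime tr p v t"
    and "tr t v \<noteq> Some p"
  shows "tr t u \<noteq> Some p"
proof
  assume "tr t u = Some p"
  then have "in_queue path itime tr p u t"
    using SIS_P_execution_sends_eligible[OF assms(1)] by (simp add: eligible_def)
  with assms(2) have "u = v"
    by (simp add: in_queue_def)
  with \<open>tr t u = Some p\<close> assms(3) show False
    by simp
qed

lemma pidx_unchanged:
  assumes "s \<le> r" and "\<And>t u. s \<le> t \<Longrightarrow> t < r \<Longrightarrow> tr t u \<noteq> Some p"
  shows "pidx tr p r = pidx tr p s"
proof -
  have "pidx tr p (s + d) = pidx tr p s" if "s + d \<le> r" for d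
    using that by (induction d) (auto simp: assms(2))
  from this[of "r - s"] assms(1) show ?thesis
    by simp
qed

lemma in_queue_next_node_edge:
  assumes "valid_path E (path p)" and "in_queue path itime tr p v t"
  shows "E v (next_node path tr p t)"
  using assms unfolding valid_path_def in_queue_def next_node_def by metis

theorem lemma2:
  fixes V :: "'v set" and E :: "'v \<Rightarrow> 'v \<Rightarrow> bool"
    and path :: "'p \<Rightarrow> 'v list" and itime :: "'p \<Rightarrow> nat"
    and Orc :: "nat \<Rightarrow> 'v \<Rightarrow> bool" and tr :: "nat \<Rightarrow> 'v \<Rightarrow> 'p option"
    and h s :: nat and v :: 'v and p :: 'p
  assumes "simple_graph V E"
    and "\<forall>q. valid_path E (path q) \<and> set (path q) \<subseteq> V"
    and "\<forall>t. finite {q. itime q = t}"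
    and "0 < h"
    and "in_TO E h Orc"
    and "SIS_P_execution E Orc path itime tr"
    and "\<forall>r. s \<le> r \<and> r < s + h \<longrightarrow> in_queue path itime tr p v r \<and> tr r v \<noteq> Some p"
  shows "\<exists>r q. s \<le> r \<and> r < s + h \<and> tr r v = Some q \<and> q \<noteq> p \<and> itime p \<le> itime q"
proof -
  note waiting = assms(7)[rule_format]
  have silent: "tr t u \<noteq> Some p" if "s \<le> t" "t < s + h" for t u
    using that waiting[of t] SIS_P_execution_sender_unique[OF assms(6)] by blast
  have fixed_hop: "pidx tr p r = pidx tr p s" if "s \<le> r" "r < s + h" for r
    using that silent by (intro pidx_unchanged) auto
  define w where "w = next_node path tr p s"
  have "E v w"
    using in_queue_next_node_edge[of E path p itime tr v s] assms(2) waiting[of s] \<open>0 < h\<close>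
    by (simp add: w_def)
  then obtain r where r: "s \<le> r" "r < s + h" and up: "link_up E Orc r v w"
    using assms(5) unfolding in_TO_def by blast
  have "p \<in> eligible E Orc path itime tr r v"
    using waiting[of r] r fixed_hop[OF r] up by (simp add: eligible_def next_node_def w_def)
  then obtain q where "tr r v = Some q" "itime p \<le> itime q"
    using SIS_P_execution_sends_younger[OF assms(6)] by blast
  with r waiting[of r] show ?thesis
    by blast
qed

end
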